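(* Let $G$ be a finite simple connected graph and let $S\subseteq V(G)$ with $|S|=k\geq 2$. Then $\kappa_k^*(G)\leq \kappa_k^*(G[S])+(|V(G)|-k)$.
   Context: $G[S]$ is the subgraph of $G$ induced by $S$. For $S\subseteq V(H)$ with $|S|\ge 2$, an $S$-Steiner tree of a graph $H$ is a subtree $T$ of $H$ with $S\subseteq V(T)$ all of whose leaves belong to $S$. A family of $S$-Steiner trees $T_1,\dots,T_k$ is completely independent if for all $1\le p<q\le k$: $E(T_p)\cap E(T_q)=\emptyset$, $V(T_p)\cap V(T_q)=S$, and for any two vertices $x_1,x_2\in S$ the $(x_1,x_2)$-paths in $T_p$ and in $T_q$ are internally disjoint. $\kappa^*_H(S)$ is the maximum number of trees in a completely independent family of $S$-Steiner trees in $H$, and $\kappa_k^*(H)=\min\{\kappa^*_H(S): S\subseteq V(H),\ |S|=k\}$. *)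

theory Defs
  imports Main
begin

definition simple_graph :: "'a set \<Rightarrow> 'a set set \<Rightarrow> bool" where
  "simple_graph V E \<longleftrightarrow> finite V \<and>
     (\<forall>e\<in>E. \<exists>u v. u \<noteq> v \<and> e = {u, v} \<and> u \<in> V \<and> v \<in> V)"

definition is_walk :: "'a set set \<Rightarrow> 'a list \<Rightarrow> bool" where
  "is_walk E p \<longleftrightarrow> p \<noteq> [] \<and> (\<forall>i. Suc i < length p \<longrightarrow> {p ! i, p ! Suc i} \<in> E)"

definition is_path :: "'a set set \<Rightarrow> 'a \<Rightarrow> 'a \<Rightarrow> 'a list \<Rightarrow> bool" where
  "is_path E x y p \<longleftrightarrow> is_walk E p \<and> distinct p \<and> hd p = x \<and> last p = y"

definition graph_connected :: "'a set \<Rightarrow> 'a set set \<Rightarrow> bool" where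
  "graph_connected V E \<longleftrightarrow>
     (\<forall>u\<in>V. \<forall>v\<in>V. \<exists>p. is_walk E p \<and> set p \<subseteq> V \<and> hd p = u \<and> last p = v)"

definition is_cycle :: "'a set set \<Rightarrow> 'a list \<Rightarrow> bool" where
  "is_cycle E p \<longleftrightarrow> length p \<ge> 3 \<and> distinct p \<and> is_walk E p \<and> {last p, hd p} \<in> E"

definition is_tree :: "'a set \<Rightarrow> 'a set set \<Rightarrow> bool" where
  "is_tree V E \<longleftrightarrow> simple_graph V E \<and> V \<noteq> {} \<and> graph_connected V E \<and>
     (\<nexists>p. is_cycle E p)"

definition induced_edges :: "'a set set \<Rightarrow> 'a set \<Rightarrow> 'a set set" where
  "induced_edges E S = {e \<in> E. e \<subseteq> S}"

definition degree :: "'a set set \<Rightarrow> 'a \<Rightarrow> nat" where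
  "degree E v = card {e \<in> E. v \<in> e}"

definition steiner_tree :: "'a set \<Rightarrow> 'a set set \<Rightarrow> 'a set \<Rightarrow> 'a set \<Rightarrow> 'a set set \<Rightarrow> bool" where
  "steiner_tree V E S VT ET \<longleftrightarrow> VT \<subseteq> V \<and> ET \<subseteq> E \<and> is_tree VT ET \<and> S \<subseteq> VT \<and>
     (\<forall>v\<in>VT. degree ET v = 1 \<longrightarrow> v \<in> S)"

definition internal_vertices :: "'a list \<Rightarrow> 'a set" where
  "internal_vertices p = set (butlast (tl p))"

definition compl_indep_family ::
  "'a set \<Rightarrow> 'a set set \<Rightarrow> 'a set \<Rightarrow> nat \<Rightarrow> (nat \<Rightarrow> 'a set \<times> 'a set set) \<Rightarrow> bool" where
  "compl_indep_family V E S k T \<longleftrightarrow>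
     (\<forall>i<k. steiner_tree V E S (fst (T i)) (snd (T i))) \<and>
     (\<forall>p q. p < q \<and> q < k \<longrightarrow>
        snd (T p) \<inter> snd (T q) = {} \<and>
        fst (T p) \<inter> fst (T q) = S \<and>
        (\<forall>x1\<in>S. \<forall>x2\<in>S. \<forall>P Q. is_path (snd (T p)) x1 x2 P \<longrightarrow> is_path (snd (T q)) x1 x2 Q \<longrightarrow>
            internal_vertices P \<inter> internal_vertices Q = {}))"

definition kappa_star_set :: "'a set \<Rightarrow> 'a set set \<Rightarrow> 'a set \<Rightarrow> nat" where
  "kappa_star_set V E S = Max {k. \<exists>T. compl_indep_family V E S k T}"

definition kappa_star :: "nat \<Rightarrow> 'a set \<Rightarrow> 'a set set \<Rightarrow> nat" where
  "kappa_star k V E = Min {kappa_star_set V E S | S. S \<subseteq> V \<and> card S = k}"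

end

theory Submission
  imports Defs
begin

text \<open>
  Split a completely independent family of S-Steiner trees of G into the trees whose vertex set
  is exactly S and the others. The former are S-Steiner trees of G[S] and still completely
  independent there, so there are at most \<open>\<kappa>\<^sup>*\<^bsub>G[S]\<^esub>(S)\<close> of them. Each of the latter
  contains a vertex outside S, and these vertices are pairwise distinct because any two trees
  of the family meet exactly in S; so there are at most |V(G)| - k of them. Since S is the only
  k-subset of S, \<open>\<kappa>\<^sup>*\<^bsub>G[S]\<^esub>(S) = \<kappa>\<^sub>k\<^sup>*(G[S])\<close>.
\<close>

definition compl_indep_pair :: "'a set \<Rightarrow> 'a set \<times> 'a set set \<Rightarrow> 'a set \<times> 'a set set \<Rightarrow> bool" where
  "compl_indep_pair S A B \<longleftrightarrow>
     snd A \<inter> snd B = {} \<and> fst A \<inter> fst B = S \<and>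
     (\<forall>x1\<in>S. \<forall>x2\<in>S. \<forall>P Q. is_path (snd A) x1 x2 P \<longrightarrow> is_path (snd B) x1 x2 Q \<longrightarrow>
        internal_vertices P \<inter> internal_vertices Q = {})"

lemma compl_indep_pair_sym: "compl_indep_pair S A B \<Longrightarrow> compl_indep_pair S B A"
  unfolding compl_indep_pair_def by blast

lemma compl_indep_family_iff:
  "compl_indep_family V E S m T \<longleftrightarrow>
     (\<forall>i<m. steiner_tree V E S (fst (T i)) (snd (T i))) \<and>
     (\<forall>p<m. \<forall>q<m. p \<noteq> q \<longrightarrow> compl_indep_pair S (T p) (T q))"
proof -
  have "(\<forall>p q. p < q \<and> q < m \<longrightarrow> compl_indep_pair S (T p) (T q)) \<longleftrightarrow>
        (\<forall>p<m. \<forall>q<m. p \<noteq> q \<longrightarrow> compl_indep_pair S (T p) (T q))"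
    by (metis compl_indep_pair_sym linorder_neq_iff order.strict_trans)
  then show ?thesis
    unfolding compl_indep_family_def compl_indep_pair_def[symmetric] by (simp only:)
qed

lemma compl_indep_family_steiner_tree:
  "compl_indep_family V E S m T \<Longrightarrow> i < m \<Longrightarrow> steiner_tree V E S (fst (T i)) (snd (T i))"
  unfolding compl_indep_family_def by blast

lemma compl_indep_familyD:
  assumes "compl_indep_family V E S m T" and "p < m" "q < m" "p \<noteq> q"
  shows "compl_indep_pair S (T p) (T q)"
  using assms unfolding compl_indep_family_iff by simp

lemma compl_indep_family_reindex:
  assumes "compl_indep_family V E S m T"
    and "inj_on g {..<n}" "g ` {..<n} \<subseteq> {..<m}"
    and "\<And>i. i < n \<Longrightarrow> steiner_tree V' E' S (fst (T (g i))) (snd (T (g i)))"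
  shows "compl_indep_family V' E' S n (T \<circ> g)"
  unfolding compl_indep_family_iff
proof (intro conjI allI impI)
  fix p q assume "p < n" "q < n" "p \<noteq> q"
  with assms(2,3) have "g p < m" "g q < m" "g p \<noteq> g q"
    by (auto dest: inj_onD)
  with assms(1) show "compl_indep_pair S ((T \<circ> g) p) ((T \<circ> g) q)"
    by (simp add: compl_indep_familyD)
qed (simp add: assms(4))

lemma simple_graph_edge_subset: "simple_graph V E \<Longrightarrow> e \<in> E \<Longrightarrow> e \<subseteq> V"
  unfolding simple_graph_def by fastforce

lemma simple_graph_finite_edges: "simple_graph V E \<Longrightarrow> finite E"
  using simple_graph_edge_subset finite_subset[of E "Pow V"] by (fastforce simp: simple_graph_def)

lemma finite_induced_edges: "finite W \<Longrightarrow> finite (induced_edges E W)"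
  using finite_subset[of "induced_edges E W" "Pow W"] by (auto simp: induced_edges_def)

lemma steiner_tree_induced:
  assumes "steiner_tree V E S VT ET" and "VT \<subseteq> W"
  shows "steiner_tree W (induced_edges E W) S VT ET"
proof -
  have "e \<subseteq> VT" if "e \<in> ET" for e
    using assms(1) that simple_graph_edge_subset unfolding steiner_tree_def is_tree_def by blast
  with assms show ?thesis
    unfolding steiner_tree_def induced_edges_def by blast
qed

lemma tree_has_edge:
  assumes "is_tree VT ET" "u \<in> VT" "v \<in> VT" "u \<noteq> v"
  shows "ET \<noteq> {}"
proof -
  obtain p where p: "is_walk ET p" "hd p = u" "last p = v"
    using assms(1-3) unfolding is_tree_def graph_connected_def by blast
  have "Suc 0 < length p"
  proof (cases p)
    case (Cons a p')
    with p assms(4) show ?thesis by (cases p') auto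
  qed (use p in \<open>simp add: is_walk_def\<close>)
  with p(1) have "{p ! 0, p ! Suc 0} \<in> ET"
    unfolding is_walk_def by blast
  then show ?thesis by blast
qed

text \<open>
  The hypothesis \<open>2 \<le> card S\<close> below is essential: for \<open>S = {v}\<close> the edgeless tree on \<open>{v}\<close>
  can be repeated arbitrarily often, the set of family sizes is infinite and Max of it is junk.
\<close>

lemma compl_indep_family_le_card_edges:
  assumes family: "compl_indep_family V E S m T" and "finite E" and "2 \<le> card S"
  shows "m \<le> card E"
proof -
  obtain u v where uv: "u \<in> S" "v \<in> S" "u \<noteq> v"
    using obtain_subset_with_card_n[OF \<open>2 \<le> card S\<close>] card_2_iff by (metis insert_subset)
  note tree = compl_indep_family_steiner_tree[OF family]
  have "\<exists>e. e \<in> snd (T i)" if "i < m" for i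
    using tree_has_edge[of "fst (T i)" "snd (T i)" u v] tree[OF that] uv
    unfolding steiner_tree_def by blast
  then obtain f where f: "\<And>i. i < m \<Longrightarrow> f i \<in> snd (T i)" by metis
  have "inj_on f {..<m}"
  proof (rule inj_onI, rule ccontr)
    fix p q assume "p \<in> {..<m}" "q \<in> {..<m}" "f p = f q" "p \<noteq> q"
    with family have "snd (T p) \<inter> snd (T q) = {}"
      using compl_indep_familyD unfolding compl_indep_pair_def by (metis lessThan_iff)
    with f \<open>p \<in> {..<m}\<close> \<open>q \<in> {..<m}\<close> \<open>f p = f q\<close> show False
      by (metis disjoint_iff lessThan_iff)
  qed
  moreover have "f ` {..<m} \<subseteq> E"
    using f tree unfolding steiner_tree_def by blast
  ultimately have "card {..<m} \<le> card E"
    using \<open>finite E\<close> by (rule card_inj_on_le)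
  then show ?thesis by simp
qed

lemma finite_compl_indep_family_sizes:
  assumes "finite E" and "2 \<le> card S"
  shows "finite {m. \<exists>T. compl_indep_family V E S m T}"
proof -
  have "{m. \<exists>T. compl_indep_family V E S m T} \<subseteq> {..card E}"
    using compl_indep_family_le_card_edges[OF _ assms] by auto
  then show ?thesis by (rule finite_subset) simp
qed

lemma le_kappa_star_set:
  assumes "compl_indep_family V E S m T" and "finite E" and "2 \<le> card S"
  shows "m \<le> kappa_star_set V E S"
  unfolding kappa_star_set_def
  by (rule Max_ge[OF finite_compl_indep_family_sizes[OF assms(2,3)]]) (use assms(1) in blast)

lemma kappa_star_set_attained:
  assumes "finite E" and "2 \<le> card S"
  shows "\<exists>T. compl_indep_family V E S (kappa_star_set V E S) T"
proof -
  have "compl_indep_family V E S 0 T" for T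
    unfolding compl_indep_family_def by simp
  then have "{m. \<exists>T. compl_indep_family V E S m T} \<noteq> {}" by blast
  with finite_compl_indep_family_sizes[OF assms] show ?thesis
    unfolding kappa_star_set_def using Max_in by blast
qed

lemma card_trees_with_extra_vertex_le:
  assumes family: "compl_indep_family V E S m T" and "finite V"
  shows "card {i. i < m \<and> fst (T i) \<noteq> S} \<le> card (V - S)"
proof -
  let ?J = "{i. i < m \<and> fst (T i) \<noteq> S}"
  note tree = compl_indep_family_steiner_tree[OF family]
  have "\<exists>x. x \<in> fst (T i) - S" if "i \<in> ?J" for i
    using that tree unfolding steiner_tree_def by blast
  then obtain f where f: "\<And>i. i \<in> ?J \<Longrightarrow> f i \<in> fst (T i) - S" by metis
  have "inj_on f ?J"
  proof (rule inj_onI, rule ccontr)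
    fix p q assume "p \<in> ?J" "q \<in> ?J" "f p = f q" "p \<noteq> q"
    with family have "fst (T p) \<inter> fst (T q) = S"
      using compl_indep_familyD unfolding compl_indep_pair_def by (metis mem_Collect_eq)
    with f \<open>p \<in> ?J\<close> \<open>q \<in> ?J\<close> \<open>f p = f q\<close> show False
      by (metis DiffD1 DiffD2 IntI)
  qed
  moreover have "f ` ?J \<subseteq> V - S"
    using f tree unfolding steiner_tree_def by blast
  ultimately show ?thesis
    using \<open>finite V\<close> by (simp add: card_inj_on_le)
qed

lemma compl_indep_family_le_induced:
  assumes family: "compl_indep_family V E S m T"
    and "finite V" "S \<subseteq> V" "2 \<le> card S"
  shows "m \<le> kappa_star_set S (induced_edges E S) S + card (V - S)"
proof -
  define I where "I = {i. i < m \<and> fst (T i) = S}"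
  define J where "J = {i. i < m \<and> fst (T i) \<noteq> S}"
  have "m = card I + card J"
  proof -
    have "{..<m} = I \<union> J" "I \<inter> J = {}"
      unfolding I_def J_def by auto
    then show ?thesis
      by (metis card_Un_disjoint card_lessThan finite_Un finite_lessThan)
  qed
  moreover have "card I \<le> kappa_star_set S (induced_edges E S) S"
  proof -
    obtain g where g: "bij_betw g {..<card I} I"
      using ex_bij_betw_nat_finite[of I] by (auto simp: I_def atLeast0LessThan)
    have "steiner_tree S (induced_edges E S) S (fst (T (g i))) (snd (T (g i)))"
      if "i < card I" for i
    proof -
      have "g i \<in> I" using g that by (auto dest: bij_betwE)
      then show ?thesis
        using compl_indep_family_steiner_tree[OF family] steiner_tree_induced
        unfolding I_def by fastforce
    qed
    with g family have "compl_indep_family S (induced_edges E S) S (card I) (T \<circ> g)"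
      by (intro compl_indep_family_reindex) (auto simp: bij_betw_def I_def)
    moreover have "finite (induced_edges E S)"
      using \<open>finite V\<close> \<open>S \<subseteq> V\<close> finite_induced_edges finite_subset by blast
    ultimately show ?thesis
      using le_kappa_star_set \<open>2 \<le> card S\<close> by blast
  qed
  moreover have "card J \<le> card (V - S)"
    unfolding J_def using card_trees_with_extra_vertex_le[OF family \<open>finite V\<close>] .
  ultimately show ?thesis by linarith
qed

lemma kappa_star_le_kappa_star_set:
  assumes "finite V" and "S \<subseteq> V"
  shows "kappa_star (card S) V E \<le> kappa_star_set V E S"
proof -
  have "{kappa_star_set V E S' | S'. S' \<subseteq> V \<and> card S' = card S} \<subseteq> kappa_star_set V E ` Pow V"
    by auto
  then have "finite {kappa_star_set V E S' | S'. S' \<subseteq> V \<and> card S' = card S}"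
    using \<open>finite V\<close> finite_subset by blast
  with \<open>S \<subseteq> V\<close> show ?thesis
    unfolding kappa_star_def by (blast intro: Min_le)
qed

lemma kappa_star_card_self:
  assumes "finite S"
  shows "kappa_star (card S) S E = kappa_star_set S E S"
proof -
  have "{kappa_star_set S E S' | S'. S' \<subseteq> S \<and> card S' = card S} = {kappa_star_set S E S}"
    using card_subset_eq[OF \<open>finite S\<close>] by blast
  then show ?thesis
    unfolding kappa_star_def by simp
qed

theorem theorem2p4:
  fixes V :: "'a set" and E :: "'a set set" and S :: "'a set" and k :: nat
  assumes "simple_graph V E" and "graph_connected V E"
    and "S \<subseteq> V" and "card S = k" and "k \<ge> 2"
  shows "kappa_star k V E \<le> kappa_star k S (induced_edges E S) + (card V - k)"
proof -
  have "finite V"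
    using assms(1) by (simp add: simple_graph_def)
  moreover have "finite E"
    using assms(1) by (rule simple_graph_finite_edges)
  ultimately obtain T where "compl_indep_family V E S (kappa_star_set V E S) T"
    using kappa_star_set_attained assms(4,5) by blast
  then have "kappa_star_set V E S \<le> kappa_star_set S (induced_edges E S) S + card (V - S)"
    using compl_indep_family_le_induced \<open>finite V\<close> assms(3-5) by blast
  moreover have "kappa_star k V E \<le> kappa_star_set V E S"
    using kappa_star_le_kappa_star_set \<open>finite V\<close> assms(3,4) by blast
  moreover have "kappa_star k S (induced_edges E S) = kappa_star_set S (induced_edges E S) S"
    using kappa_star_card_self \<open>finite V\<close> assms(3,4) finite_subset by blast
  moreover have "card (V - S) = card V - k"
    using card_Diff_subset \<open>finite V\<close> assms(3,4) finite_subset by metis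
  ultimately show ?thesis by linarith
qed

end
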